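(* Let $p$ be a prime and $e \ge 1$. Then $A_{p^e}$ is the $p \times p$ block matrix (each block of size $p^{e-1}\times p^{e-1}$) \[A_{p^e} = \begin{pmatrix} A_{p^{e-1}} & A_{p^{e-1}} & \cdots & A_{p^{e-1}} & A_{p^{e-1}} \\ I_{p^{e-1}} & 0 & \cdots & 0 & -I_{p^{e-1}} \\ 0 & I_{p^{e-1}} & \cdots & 0 & -I_{p^{e-1}} \\ \vdots & & \ddots & & \vdots \\ 0 & 0 & \cdots & I_{p^{e-1}} & -I_{p^{e-1}} \end{pmatrix},\] with $A_1 = (1)$.
   Context: For a positive integer $k$, let $\Phi_d$ denote the $d$th cyclotomic polynomial and let $\Psi_k : \mathbf{Z}[X]/(X^k-1) \to \bigoplus_{d \mid k} \mathbf{Z}[X]/(\Phi_d(X))$ be the natural map $f \bmod (X^k-1) \mapsto \bigoplus_{d\mid k} f \bmod \Phi_d(X)$. Endow $\mathbf{Z}[X]/(X^k-1)$ with the basis $(1, \overline{X}, \dots, \overline{X}^{k-1})$, each $\mathbf{Z}[X]/(\Phi_d(X))$ with the basis $(1, \overline{X}, \dots, \overline{X}^{\phi(d)-1})$, and order the summands of the direct sum by increasing $d$. $A_k$ is the $k\times k$ integer matrix of $\Psi_k$ with respect to these bases (the $j$th column is the coordinate vector of $\Psi_k(\overline{X}^{j})$). $I_r$ is the $r\times r$ identity matrix. *)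

theory Defs
  imports "HOL-Computational_Algebra.Polynomial" "HOL-Number_Theory.Totient"
    "Jordan_Normal_Form.Matrix" Complex_Main
begin

definition cyclotomic_C :: "nat \<Rightarrow> complex poly" where
  "cyclotomic_C d = (\<Prod>k\<in>{k. k < d \<and> coprime k d}. [:- cis (2 * pi * real k / real d), 1:])"

definition cyclotomic :: "nat \<Rightarrow> int poly" where
  "cyclotomic d = (THE q. map_poly of_int q = cyclotomic_C d)"

(* coordinate vector of X^j mod Phi_d w.r.t. the basis 1, X, ..., X^(phi(d)-1) of Z[X]/(Phi_d) *)
definition coords :: "nat \<Rightarrow> nat \<Rightarrow> int list" where
  "coords d j = (THE c. length c = totient d \<and> cyclotomic d dvd (monom 1 j - Poly c))"

(* coordinate vector of Psi_k(X^j): summands ordered by increasing divisor d of k *)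
definition Psi_col :: "nat \<Rightarrow> nat \<Rightarrow> int list" where
  "Psi_col k j = concat (map (\<lambda>d. coords d j) (sorted_list_of_set {d. d dvd k}))"

definition A_mat :: "nat \<Rightarrow> int mat" where
  "A_mat k = mat k k (\<lambda>(i, j). Psi_col k j ! i)"

end

theory Submission imports Defs begin

text \<open>
  For \<open>d = p^f\<close> with \<open>f \<ge> 1\<close> and \<open>m = p^(f-1)\<close>, the cyclotomic polynomial is
  \<open>\<Phi>_d = 1 + X^m + ... + X^((p-1)m)\<close>: this monic polynomial of degree \<open>\<phi>(d)\<close> vanishes
  at every primitive \<open>d\<close>-th root of unity. As \<open>\<Phi>_d\<close> divides \<open>X^d - 1\<close>, reducing \<open>X^j\<close>
  modulo \<open>\<Phi>_d\<close> first reduces \<open>j\<close> modulo \<open>d\<close>; then \<open>X^j\<close> is already reduced if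
  \<open>j < (p-1)m\<close>, and \<open>X^((p-1)m + s) \<equiv> -(X^s + X^(m+s) + ... + X^((p-2)m+s))\<close> otherwise.
  These coordinates form the last \<open>(p-1)p^(e-1)\<close> rows of \<open>A_(p^e)\<close>. The divisors of \<open>p^e\<close>
  are \<open>1, p, ..., p^e\<close>; all but the last divide \<open>p^(e-1)\<close>, and their coordinates depend
  only on \<open>j mod p^(e-1)\<close>, so the first \<open>p^(e-1)\<close> rows repeat \<open>A_(p^(e-1))\<close>.
\<close>

section \<open>The cyclotomic polynomial of a prime power\<close>

lemma coeff_sum_monom_progression:
  fixes m s N i :: nat
  assumes "s < m"
  shows "coeff (\<Sum>b<N. monom (1::'a::comm_ring_1) (b * m + s)) i =
    (if i mod m = s \<and> i div m < N then 1 else 0)"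
proof -
  have "b * m + s = i \<longleftrightarrow> b = i div m \<and> i mod m = s" for b
  proof
    assume "b * m + s = i"
    then show "b = i div m \<and> i mod m = s" using assms by auto
  next
    assume "b = i div m \<and> i mod m = s"
    then show "b * m + s = i" by (metis div_mult_mod_eq)
  qed
  then have "coeff (\<Sum>b<N. monom (1::'a) (b * m + s)) i =
      (\<Sum>b<N. if b = i div m then (if i mod m = s then 1 else 0) else 0)"
    unfolding coeff_sum coeff_monom by (intro sum.cong) auto
  also have "\<dots> = (if i mod m = s \<and> i div m < N then 1 else 0)"
    by (subst sum.delta) auto
  finally show ?thesis .
qed

definition geom_poly :: "nat \<Rightarrow> nat \<Rightarrow> 'a::comm_ring_1 poly" where
  "geom_poly N m = (\<Sum>b<N. monom 1 (b * m))"

lemma coeff_geom_poly: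
  "0 < m \<Longrightarrow> coeff (geom_poly N m :: 'a::comm_ring_1 poly) i =
    (if i mod m = 0 \<and> i div m < N then 1 else 0)"
  using coeff_sum_monom_progression[of 0 m N i] by (simp add: geom_poly_def)

lemma degree_geom_poly:
  assumes "0 < m" "0 < N"
  shows "degree (geom_poly N m :: 'a::comm_ring_1 poly) = (N - 1) * m"
proof (rule antisym)
  show "degree (geom_poly N m :: 'a poly) \<le> (N - 1) * m"
  proof (rule degree_le, intro allI impI)
    fix i assume i: "(N - 1) * m < i"
    have "\<not> (i mod m = 0 \<and> i div m < N)"
    proof
      assume h: "i mod m = 0 \<and> i div m < N"
      then have "i = (i div m) * m" by (metis add_0_right div_mult_mod_eq)
      also have "\<dots> \<le> (N - 1) * m" using h by (intro mult_right_mono) auto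
      finally show False using i by simp
    qed
    then show "coeff (geom_poly N m :: 'a poly) i = 0"
      by (simp add: coeff_geom_poly[OF assms(1)])
  qed
  show "(N - 1) * m \<le> degree (geom_poly N m :: 'a poly)"
    by (rule le_degree) (use assms in \<open>simp add: coeff_geom_poly\<close>)
qed

lemma lead_coeff_geom_poly:
  "0 < m \<Longrightarrow> 0 < N \<Longrightarrow> lead_coeff (geom_poly N m :: 'a::comm_ring_1 poly) = 1"
  by (simp add: degree_geom_poly coeff_geom_poly)

lemma map_poly_of_int_geom_poly:
  "0 < m \<Longrightarrow> map_poly of_int (geom_poly N m) = (geom_poly N m :: 'a::comm_ring_1 poly)"
  by (rule poly_eqI) (simp add: coeff_map_poly coeff_geom_poly)

lemma poly_geom_poly: "poly (geom_poly N m) z = (\<Sum>b<N. z ^ (b * m))"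
  by (simp add: geom_poly_def poly_sum poly_monom)

lemma prod_linear_factors_dvd:
  fixes z :: "nat \<Rightarrow> 'a::idom"
  assumes "finite A" "inj_on z A" "\<And>k. k \<in> A \<Longrightarrow> poly P (z k) = 0"
  shows "(\<Prod>k\<in>A. [:- z k, 1:]) dvd P"
  using assms
proof (induction A arbitrary: P rule: finite_induct)
  case empty
  then show ?case by simp
next
  case (insert a A)
  from insert.prems(2) have "[:- z a, 1:] dvd P"
    by (simp add: poly_eq_0_iff_dvd[symmetric])
  then obtain P' where P': "P = [:- z a, 1:] * P'" by (elim dvdE)
  have "(\<Prod>k\<in>A. [:- z k, 1:]) dvd P'"
  proof (rule insert.IH)
    show "inj_on z A" using insert.prems(1) by (simp add: inj_on_insert)
    fix k assume k: "k \<in> A"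
    then have "z k \<noteq> z a" using insert.prems(1) insert.hyps(2) by (auto simp: inj_on_def)
    moreover have "poly P (z k) = 0" using k insert.prems(2) by simp
    ultimately show "poly P' (z k) = 0" using P' by simp
  qed
  then have "[:- z a, 1:] * (\<Prod>k\<in>A. [:- z k, 1:]) dvd [:- z a, 1:] * P'"
    by (rule mult_dvd_mono[OF dvd_refl])
  then show ?case using P' insert.hyps by simp
qed

lemma monic_dvd_same_degree_eq:
  fixes P Q :: "'a::field poly"
  assumes "P dvd Q" "degree P = degree Q" "lead_coeff P = 1" "lead_coeff Q = 1"
  shows "P = Q"
proof -
  obtain R where R: "Q = P * R" using assms(1) by (elim dvdE)
  have "Q \<noteq> 0" "P \<noteq> 0" using assms(3,4) by auto
  then have "R \<noteq> 0" using R by auto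
  then have "degree R = 0" using R \<open>P \<noteq> 0\<close> assms(2) by (simp add: degree_mult_eq)
  moreover have "lead_coeff R = 1" using R assms(3,4) by (simp add: lead_coeff_mult)
  ultimately have "R = 1" by (metis degree_0_id one_pCons)
  then show ?thesis using R by simp
qed

lemma card_coprime_less_eq_totient:
  assumes "d > 1" shows "card {k. k < d \<and> coprime k d} = totient d"
proof -
  have "{k. k < d \<and> coprime k d} = totatives d"
  proof (auto simp: totatives_def)
    fix x assume "x < d" "coprime x d"
    then show "0 < x" using assms by (cases "x = 0") auto
  next
    fix x assume "0 < x" "x \<le> d" "coprime x d"
    then show "x < d" using assms by (cases "x = d") auto
  qed
  then show ?thesis by (simp add: totient_def)
qed

lemma sum_powers_root_of_unity_eq_0:
  fixes p k :: nat
  assumes p0: "0 < p" and "\<not> p dvd k"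
  shows "(\<Sum>b<p. cis (2 * pi * real k / real p) ^ b) = 0"
proof -
  define w where "w = cis (2 * pi * real k / real p)"
  have "w ^ p = cis (real p * (2 * pi * real k / real p))" by (simp add: w_def DeMoivre)
  also have "\<dots> = cis (2 * pi * real k)" using p0 by simp
  also have "\<dots> = 1" by (rule cis_multiple_2pi) simp
  finally have wp: "w ^ p = 1" .
  have "real k = real (k div p) * real p + real (k mod p)"
    by (metis div_mult_mod_eq of_nat_add of_nat_mult)
  then have "2 * pi * real k / real p = 2 * pi * real (k mod p) / real p + 2 * pi * real (k div p)"
    using p0 by (simp add: field_simps)
  then have "w = cis (2 * pi * real (k mod p) / real p + 2 * pi * real (k div p))"
    by (simp add: w_def)
  also have "\<dots> = cis (2 * pi * real (k mod p) / real p) * cis (2 * pi * real (k div p))"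
    by (rule cis_mult[symmetric])
  also have "cis (2 * pi * real (k div p)) = 1" by (rule cis_multiple_2pi) simp
  finally have w': "w = cis (2 * pi * real (k mod p) / real p)" by simp
  have "w \<noteq> 1"
  proof
    assume "w = 1"
    then have "cis (2 * pi * real (k mod p) / real p) = cis (2 * pi * real 0 / real p)"
      using w' by simp
    moreover have "inj_on (\<lambda>k. cis (2 * pi * real k / real p)) {..<p}"
      using bij_betw_roots_unity[OF p0] by (simp add: bij_betw_def)
    ultimately have "k mod p = 0" using p0 by (auto simp: inj_on_def)
    then show False using assms(2) by (simp add: dvd_eq_mod_eq_0)
  qed
  then have "(\<Sum>b<p. w ^ b) = (w ^ p - 1) / (w - 1)" by (rule geometric_sum)
  then show ?thesis using wp by (simp add: w_def)
qed

lemma geom_poly_primitive_root_eq_0: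
  fixes p f k :: nat
  assumes "prime p" "f \<ge> 1" "coprime k (p ^ f)"
  shows "poly (geom_poly p (p ^ (f - 1))) (cis (2 * pi * real k / real (p ^ f))) = 0"
proof -
  define m where "m = p ^ (f - 1)"
  have p1: "p > 1" using assms(1) prime_gt_1_nat by blast
  have pm: "p ^ f = p * m" using assms(2) by (simp add: m_def power_eq_if)
  have "\<not> p dvd k"
    using assms p1 coprime_common_divisor_nat[of k "p ^ f" p] by (auto simp: pm)
  have "cis (2 * pi * real k / real (p ^ f)) ^ m = cis (real m * (2 * pi * real k / real (p * m)))"
    by (simp add: DeMoivre pm)
  also have "\<dots> = cis (2 * pi * real k / real p)"
    using p1 by (simp add: m_def field_simps)
  finally have zm: "cis (2 * pi * real k / real (p ^ f)) ^ m = cis (2 * pi * real k / real p)" .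
  have "poly (geom_poly p m) (cis (2 * pi * real k / real (p ^ f))) =
      (\<Sum>b<p. cis (2 * pi * real k / real p) ^ b)"
    unfolding poly_geom_poly zm[symmetric] by (simp add: power_mult[symmetric] mult.commute)
  also have "\<dots> = 0" using p1 \<open>\<not> p dvd k\<close> by (intro sum_powers_root_of_unity_eq_0) auto
  finally show ?thesis by (simp add: m_def)
qed

lemma cyclotomic_C_prime_power:
  fixes p f :: nat
  assumes "prime p" "f \<ge> 1"
  shows "cyclotomic_C (p ^ f) = geom_poly p (p ^ (f - 1))"
proof -
  define d where "d = p ^ f"
  define m where "m = p ^ (f - 1)"
  define S where "S = {k. k < d \<and> coprime k d}"
  define z where "z = (\<lambda>k::nat. cis (2 * pi * real k / real d))"
  have p1: "p > 1" using assms prime_gt_1_nat by blast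
  have m0: "m > 0" using p1 by (simp add: m_def)
  have d1: "d > 1" using p1 assms unfolding d_def by (intro one_less_power) auto
  have inj: "inj_on z S"
    using bij_betw_roots_unity[of d] d1 unfolding bij_betw_def z_def S_def
    by (auto intro: inj_on_subset)
  have "poly (geom_poly p m) (z k) = 0" if "k \<in> S" for k
    using geom_poly_primitive_root_eq_0[OF assms] that by (simp add: S_def z_def d_def m_def)
  then have dvd: "(\<Prod>k\<in>S. [:- z k, 1:]) dvd geom_poly p m"
    by (intro prod_linear_factors_dvd[OF _ inj]) (auto simp: S_def)
  have "degree (\<Prod>k\<in>S. [:- z k, 1:]) = card S"
    by (subst degree_prod_eq_sum_degree) auto
  also have "\<dots> = totient d" unfolding S_def by (rule card_coprime_less_eq_totient[OF d1])
  also have "\<dots> = (p - 1) * m"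
    using totient_prime_power[OF assms(1)] assms by (simp add: d_def m_def)
  finally have deg: "degree (\<Prod>k\<in>S. [:- z k, 1:]) = (p - 1) * m" .
  have "(\<Prod>k\<in>S. [:- z k, 1:]) = geom_poly p m"
  proof (rule monic_dvd_same_degree_eq[OF dvd])
    show "degree (\<Prod>k\<in>S. [:- z k, 1:]) = degree (geom_poly p m :: complex poly)"
      using deg degree_geom_poly[OF m0, of p, where 'a=complex] p1 by simp
    show "lead_coeff (\<Prod>k\<in>S. [:- z k, 1:]) = 1" by (simp add: lead_coeff_prod)
    show "lead_coeff (geom_poly p m :: complex poly) = 1"
      using lead_coeff_geom_poly[OF m0, of p] p1 by simp
  qed
  moreover have "cyclotomic_C d = (\<Prod>k\<in>S. [:- z k, 1:])"
    by (simp add: cyclotomic_C_def S_def z_def)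
  ultimately show ?thesis by (simp add: d_def m_def)
qed

lemma cyclotomic_eqI:
  assumes "cyclotomic_C d = map_poly of_int Q"
  shows "cyclotomic d = Q"
  unfolding cyclotomic_def
proof (rule the_equality)
  show "map_poly of_int Q = cyclotomic_C d" using assms by simp
  fix q assume "map_poly of_int q = cyclotomic_C d"
  then have "map_poly (of_int :: int \<Rightarrow> complex) q = map_poly of_int Q" using assms by simp
  then show "q = Q"
    by (intro poly_eqI) (metis coeff_map_poly of_int_0 of_int_eq_iff)
qed

lemma cyclotomic_1: "cyclotomic 1 = [:-1, 1:]"
proof (rule cyclotomic_eqI)
  have "{k::nat. k < 1 \<and> coprime k 1} = {0}" by auto
  then show "cyclotomic_C 1 = map_poly of_int [:-1, 1:]"
    by (simp add: cyclotomic_C_def)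
      (rule poly_eqI, simp add: coeff_map_poly coeff_pCons split: nat.split)
qed

lemma cyclotomic_prime_power:
  assumes "prime p" "f \<ge> 1"
  shows "cyclotomic (p ^ f) = geom_poly p (p ^ (f - 1))"
  using assms prime_gt_0_nat
  by (intro cyclotomic_eqI) (simp add: map_poly_of_int_geom_poly cyclotomic_C_prime_power)

section \<open>Coordinates of \<open>X^j\<close> modulo a cyclotomic polynomial\<close>

text \<open>The coefficients of \<open>X^j\<close> reduced modulo \<open>geom_poly p m\<close>; only meaningful for \<open>j < p * m\<close>.\<close>

definition geom_rem_coeffs :: "nat \<Rightarrow> nat \<Rightarrow> nat \<Rightarrow> int list" where
  "geom_rem_coeffs p m j =
    map (\<lambda>i. if j < (p - 1) * m then (if i = j then 1 else 0)
             else if i mod m = j - (p - 1) * m then -1 else 0) [0..<(p - 1) * m]"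

lemma length_geom_rem_coeffs: "length (geom_rem_coeffs p m j) = (p - 1) * m"
  by (simp add: geom_rem_coeffs_def)

lemma geom_poly_dvd_monom_minus_rem:
  assumes "0 < m" "j < p * m"
  shows "geom_poly p m dvd monom 1 j - Poly (geom_rem_coeffs p m j)"
proof (cases "j < (p - 1) * m")
  case True
  have "Poly (geom_rem_coeffs p m j) = monom 1 j"
    by (rule poly_eqI) (use True in \<open>auto simp: geom_rem_coeffs_def nth_default_def coeff_monom\<close>)
  then show ?thesis by simp
next
  case False
  define n where "n = (p - 1) * m"
  define s where "s = j - n"
  have p0: "p > 0" using assms by (cases p) auto
  have pm: "p * m = n + m" using p0 by (cases p) (auto simp: n_def)
  have sm: "s < m" using assms(2) False pm by (simp add: s_def n_def)
  have n: "i < n \<longleftrightarrow> i div m < p - 1" for i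
    using assms(1) by (simp add: n_def less_mult_imp_div_less div_less_iff_less_mult)
  have "Poly (geom_rem_coeffs p m j) = - (\<Sum>b<p-1. monom 1 (b * m + s))"
  proof (rule poly_eqI)
    fix i
    have "nth_default 0 (geom_rem_coeffs p m j) i =
        (if i < n then (if i mod m = s then -1 else 0) else 0)"
      using False by (simp add: geom_rem_coeffs_def nth_default_def s_def n_def)
    then show "coeff (Poly (geom_rem_coeffs p m j)) i =
        coeff (- (\<Sum>b<p-1. monom 1 (b * m + s))) i"
      using n[of i] unfolding coeff_minus coeff_sum_monom_progression[OF sm] coeff_Poly_eq
      by auto
  qed
  then have "monom 1 j - Poly (geom_rem_coeffs p m j) =
      monom 1 ((p - 1) * m + s) + (\<Sum>b<p-1. monom 1 (b * m + s))"
    using False by (simp add: s_def n_def)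
  also have "\<dots> = (\<Sum>b<p. monom 1 (b * m + s))"
    using p0 by (cases p) (auto simp: add.commute)
  also have "\<dots> = monom 1 s * geom_poly p m"
    by (simp add: geom_poly_def sum_distrib_left mult_monom add.commute)
  finally show ?thesis by simp
qed

lemma geom_poly_dvd_X_power_minus_1:
  "geom_poly p m dvd (monom 1 (p * m) - 1 :: 'a::comm_ring_1 poly)"
proof -
  have "geom_poly p m = (\<Sum>i<p. (monom (1::'a) m) ^ i)"
    by (simp add: geom_poly_def monom_power mult.commute)
  then have "monom 1 (p * m) - 1 = (monom (1::'a) m - 1) * geom_poly p m"
    using power_diff_1_eq[of "monom (1::'a) m" p] by (simp add: monom_power mult.commute)
  then show ?thesis by simp
qed

lemma X_power_minus_1_dvd_monom_diff_mod:
  "(monom 1 N - 1 :: 'a::comm_ring_1 poly) dvd monom 1 j - monom 1 (j mod N)"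
proof -
  have "monom 1 j = monom (1::'a) (j mod N) * (monom 1 N) ^ (j div N)"
    by (simp add: monom_power mult_monom)
  then have "monom 1 j - monom 1 (j mod N) =
      monom (1::'a) (j mod N) * ((monom 1 N) ^ (j div N) - 1)"
    by (simp add: algebra_simps)
  also have "\<dots> =
      monom (1::'a) (j mod N) * ((monom 1 N - 1) * (\<Sum>i<j div N. (monom 1 N) ^ i))"
    by (simp add: power_diff_1_eq)
  finally show ?thesis by simp
qed

lemma coords_eqI:
  assumes "cyclotomic d = Q" "Q \<noteq> 0" "degree Q = totient d" "length c = totient d"
    "Q dvd (monom 1 j - Poly c)"
  shows "coords d j = c"
  unfolding coords_def
proof (rule the_equality)
  show "length c = totient d \<and> cyclotomic d dvd monom 1 j - Poly c" using assms by simp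
  fix c' assume c': "length c' = totient d \<and> cyclotomic d dvd monom 1 j - Poly c'"
  have "Q dvd (monom 1 j - Poly c) - (monom 1 j - Poly c')"
    using c' assms by (intro dvd_diff[of Q "monom 1 j - Poly c"]) auto
  moreover have "(monom 1 j - Poly c) - (monom 1 j - Poly c') = Poly c' - Poly c"
    by (simp add: algebra_simps)
  ultimately have dv: "Q dvd Poly c' - Poly c" by simp
  have "Poly c' - Poly c = 0"
  proof (rule ccontr)
    assume ne: "Poly c' - Poly c \<noteq> 0"
    have "degree Q \<le> degree (Poly c' - Poly c)" by (rule dvd_imp_degree[OF dv assms(2) ne])
    moreover have "degree (Poly c' - Poly c) < totient d"
    proof -
      have "coeff (Poly c' - Poly c) i = 0" if "i \<ge> totient d" for i
        using that c' assms(4) by (simp add: nth_default_def)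
      then have "degree (Poly c' - Poly c) < totient d \<or> Poly c' - Poly c = 0"
        by (metis leading_coeff_0_iff not_less)
      then show ?thesis using ne by simp
    qed
    ultimately show False using assms(3) by simp
  qed
  then have "Poly c' = Poly c" by simp
  then have "\<And>i. nth_default 0 c' i = nth_default 0 c i" by (metis coeff_Poly_eq)
  then show "c' = c" using c' assms(4)
    by (metis nth_equalityI nth_default_nth)
qed

lemma coords_1: "coords 1 j = [1]"
proof (rule coords_eqI[OF cyclotomic_1])
  show "[:-1, 1:] dvd monom 1 j - Poly [1::int]"
    by (subst poly_eq_0_iff_dvd[symmetric]) (simp add: poly_monom)
qed auto

definition pp_coords :: "nat \<Rightarrow> nat \<Rightarrow> nat \<Rightarrow> int list" where
  "pp_coords p f j =
    (if f = 0 then [1] else geom_rem_coeffs p (p ^ (f - 1)) (j mod p ^ f))"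

lemma coords_prime_power:
  assumes "prime p"
  shows "coords (p ^ f) j = pp_coords p f j"
proof (cases "f = 0")
  case True
  then show ?thesis using coords_1[of j] by (simp add: pp_coords_def)
next
  case False
  define m where "m = p ^ (f - 1)"
  have p1: "p > 1" using assms prime_gt_1_nat by blast
  have m0: "m > 0" using p1 by (simp add: m_def)
  have pm: "p ^ f = p * m" using False by (simp add: m_def power_eq_if)
  have tot: "totient (p ^ f) = (p - 1) * m"
    using totient_prime_power[OF assms, of f] False by (simp add: m_def)
  have rem: "pp_coords p f j = geom_rem_coeffs p m (j mod p ^ f)"
    using False by (simp add: pp_coords_def m_def)
  have "geom_poly p m dvd
      (monom 1 j - monom 1 (j mod p ^ f)) + (monom 1 (j mod p ^ f) - Poly (pp_coords p f j))"
  proof (rule dvd_add)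
    show "geom_poly p m dvd monom 1 j - monom 1 (j mod p ^ f)"
      unfolding pm
      by (rule dvd_trans[OF geom_poly_dvd_X_power_minus_1 X_power_minus_1_dvd_monom_diff_mod])
    show "geom_poly p m dvd monom 1 (j mod p ^ f) - Poly (pp_coords p f j)"
      using m0 p1 pm by (simp add: rem geom_poly_dvd_monom_minus_rem)
  qed
  moreover have "cyclotomic (p ^ f) = geom_poly p m"
    using cyclotomic_prime_power[OF assms, of f] False by (simp add: m_def)
  moreover have "geom_poly p m \<noteq> (0 :: int poly)"
    using lead_coeff_geom_poly[OF m0, of p, where 'a=int] p1 by auto
  ultimately show ?thesis
    using m0 p1 tot by (intro coords_eqI) (simp_all add: degree_geom_poly rem length_geom_rem_coeffs)
qed

section \<open>The matrix of \<open>\<Psi>_(p^e)\<close>\<close>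

lemma sorted_divisors_prime_power:
  fixes p :: nat
  assumes "prime p"
  shows "sorted_list_of_set {d. d dvd p ^ e} = map (\<lambda>f. p ^ f) [0..<Suc e]"
proof -
  have p1: "p > 1" using assms prime_gt_1_nat by blast
  let ?xs = "map (\<lambda>f. p ^ f) [0..<Suc e]"
  have "set ?xs = {d. d dvd p ^ e}"
  proof (rule Set.set_eqI)
    fix d
    have "d \<in> set ?xs \<longleftrightarrow> (\<exists>i\<le>e. d = p ^ i)"
      unfolding set_map set_upt image_iff atLeastLessThan_iff
      by (auto simp: less_Suc_eq_le simp del: upt_Suc)
    then show "d \<in> set ?xs \<longleftrightarrow> d \<in> {d. d dvd p ^ e}"
      using divides_primepow_nat[OF assms, of d e] by simp
  qed
  moreover have "distinct ?xs" using p1 by (auto simp: distinct_map inj_on_def)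
  moreover have "sorted ?xs"
    unfolding sorted_map
    by (rule sorted_wrt_mono_rel[OF _ sorted_upt]) (use p1 in \<open>auto intro: power_increasing\<close>)
  ultimately show ?thesis
    by (metis sorted_list_of_set_sort_remdups distinct_remdups_id sorted_sort_id)
qed

definition pp_column :: "nat \<Rightarrow> nat \<Rightarrow> nat \<Rightarrow> int list" where
  "pp_column p e j = concat (map (\<lambda>f. pp_coords p f j) [0..<Suc e])"

lemma Psi_col_prime_power: "prime p \<Longrightarrow> Psi_col (p ^ e) j = pp_column p e j"
  by (simp add: Psi_col_def pp_column_def sorted_divisors_prime_power coords_prime_power o_def)

lemma A_mat_prime_power:
  "prime p \<Longrightarrow> A_mat (p ^ e) = mat (p ^ e) (p ^ e) (\<lambda>(i, j). pp_column p e j ! i)"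
  by (simp add: A_mat_def Psi_col_prime_power)

lemma pp_column_Suc: "pp_column p (Suc e) j = pp_column p e j @ pp_coords p (Suc e) j"
  by (simp add: pp_column_def)

lemma length_pp_column: "p > 0 \<Longrightarrow> length (pp_column p e j) = p ^ e"
proof (induction e)
  case 0
  then show ?case by (simp add: pp_column_def pp_coords_def)
next
  case (Suc e)
  then show ?case
    by (simp add: pp_column_Suc pp_coords_def length_geom_rem_coeffs algebra_simps)
qed

lemma pp_column_mod: "pp_column p e (j mod p ^ e) = pp_column p e j"
proof -
  have "pp_coords p f (j mod p ^ e) = pp_coords p f j" if "f \<le> e" for f
    using le_imp_power_dvd[OF that, of p] by (simp add: pp_coords_def mod_mod_cancel)
  then show ?thesis
    unfolding pp_column_def by (intro arg_cong[where f=concat] map_cong) auto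
qed

lemma mult_add_eq_mult_add_iff:
  fixes r s m x y :: nat
  assumes "r < m" "s < m"
  shows "x * m + r = y * m + s \<longleftrightarrow> x = y \<and> r = s"
proof
  assume "x * m + r = y * m + s"
  then have "(x * m + r) div m = (y * m + s) div m" "(x * m + r) mod m = (y * m + s) mod m"
    by simp_all
  then show "x = y \<and> r = s" using assms by simp_all
qed auto

lemma nth_geom_rem_coeffs:
  assumes "m \<le> i" "i < p * m" "j < p * m"
  shows "geom_rem_coeffs p m j ! (i - m) =
    (if j div m + 1 = i div m then (if i mod m = j mod m then 1 else 0)
     else if j div m = p - 1 then (if i mod m = j mod m then -1 else 0)
     else 0)"
proof -
  define a where "a = i div m"
  define r where "r = i mod m"
  define b where "b = j div m"
  define s where "s = j mod m"
  have m0: "m > 0" using assms by (cases m) auto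
  have rs: "r < m" "s < m" using m0 by (simp_all add: r_def s_def)
  have j: "j = b * m + s" by (simp add: b_def s_def)
  have a: "1 \<le> a" "a < p"
    using assms m0 div_greater_zero_iff[of i m] by (simp_all add: a_def div_less_iff_less_mult)
  have b: "b < p" using assms(3) m0 by (simp add: b_def div_less_iff_less_mult)
  have "i = a * m + r" by (simp add: a_def r_def)
  then have i: "i - m = (a - 1) * m + r" using a(1) by (cases a) auto
  have "i - m < (p - 1) * m" using assms by (simp add: diff_mult_distrib)
  then have "geom_rem_coeffs p m j ! (i - m) =
      (if j < (p - 1) * m then (if i - m = j then 1 else 0)
       else if (i - m) mod m = j - (p - 1) * m then -1 else 0)"
    by (simp add: geom_rem_coeffs_def)
  also have "\<dots> = (if b + 1 = a then (if r = s then 1 else 0)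
      else if b = p - 1 then (if r = s then -1 else 0) else 0)"
  proof (cases "b < p - 1")
    case True
    have "j < (b + 1) * m" using j rs by simp
    also have "\<dots> \<le> (p - 1) * m" using True by (intro mult_right_mono) auto
    finally have "j < (p - 1) * m" .
    moreover have "i - m = j \<longleftrightarrow> b + 1 = a \<and> r = s"
      unfolding i j using mult_add_eq_mult_add_iff[OF rs, of "a - 1" b] a by auto
    ultimately show ?thesis using True by auto
  next
    case False
    then have "b = p - 1" using b by simp
    moreover have "j - (p - 1) * m = s" "\<not> j < (p - 1) * m" using j \<open>b = p - 1\<close> by simp_all
    moreover have "(i - m) mod m = r" using i rs by simp
    ultimately show ?thesis using a by auto
  qed
  finally show ?thesis by (simp add: a_def r_def b_def s_def)
qed

lemma index_A_mat_prime_power_Suc: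
  assumes "prime p" "i < p ^ Suc f" "j < p ^ Suc f"
  shows "A_mat (p ^ Suc f) $$ (i, j) =
    (let m = p ^ f; a = i div m; r = i mod m; b = j div m; s = j mod m in
     if a = 0 then A_mat m $$ (r, s)
     else if b + 1 = a then (if r = s then 1 else 0)
     else if b = p - 1 then (if r = s then -1 else 0)
     else 0)"
proof -
  define m where "m = p ^ f"
  have m0: "m > 0" using assms(1) prime_gt_0_nat by (simp add: m_def)
  have len: "length (pp_column p f j) = m"
    using assms(1) prime_gt_0_nat by (simp add: length_pp_column m_def)
  have "A_mat (p ^ Suc f) $$ (i, j) = (pp_column p f j @ pp_coords p (Suc f) j) ! i"
    using assms by (simp add: A_mat_prime_power pp_column_Suc del: power_Suc)
  also have "\<dots> = (if i < m then A_mat m $$ (i, j mod m) else geom_rem_coeffs p m j ! (i - m))"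
  proof (cases "i < m")
    case True
    then have "(pp_column p f j @ pp_coords p (Suc f) j) ! i = pp_column p f (j mod m) ! i"
      using len by (simp add: nth_append pp_column_mod m_def)
    also have "\<dots> = A_mat m $$ (i, j mod m)"
      using True m0 by (simp add: A_mat_prime_power[OF assms(1)] m_def)
    finally show ?thesis using True by simp
  next
    case False
    then show ?thesis
      using len assms(3) by (simp add: nth_append pp_coords_def m_def)
  qed
  finally show ?thesis
    using assms m0 nth_geom_rem_coeffs[of m i p j]
    by (simp add: m_def[symmetric] Let_def div_eq_0_iff)
qed

lemma A_mat_1: "A_mat 1 = mat 1 1 (\<lambda>_. 1)"
proof -
  have "{d. d dvd (1::nat)} = {1}" by auto
  then show ?thesis using coords_1 by (auto simp: A_mat_def Psi_col_def intro!: eq_matI)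
qed

lemma dim_A_mat [simp]: "dim_row (A_mat k) = k" "dim_col (A_mat k) = k"
  by (simp_all add: A_mat_def)

theorem lemma2p5:
  fixes p e :: nat
  assumes "prime p" and "e \<ge> 1"
  shows "A_mat (p ^ e) =
           mat (p ^ e) (p ^ e) (\<lambda>(i, j).
             let m = p ^ (e - 1); a = i div m; r = i mod m; b = j div m; s = j mod m in
             if a = 0 then A_mat m $$ (r, s)
             else if b + 1 = a then (if r = s then 1 else 0)
             else if b = p - 1 then (if r = s then -1 else 0)
             else 0)
       \<and> A_mat 1 = mat 1 1 (\<lambda>_. 1)"
proof -
  obtain f where e: "e = Suc f" using assms(2) by (cases e) auto
  show ?thesis
    using index_A_mat_prime_power_Suc[OF assms(1)] unfolding e diff_Suc_1
    by (intro conjI eq_matI A_mat_1) (simp_all del: power_Suc)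
qed

end
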